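(* Let $-\frac1n<\alpha<0$, $\beta_1\ge0$, $\beta_2\in\mathbb{R}$. Let $f=(1-\alpha\varphi)^{1/\alpha}\in\mathcal{C}^+_\alpha(\mathbb{R}^n)$ with $o\in\mathrm{int}(K_f)$, and for $t>0$ small enough (so that it is well defined) set $$\widehat{f_t}(x)=\Big(1-\alpha\big[(1+\beta_1t)\varphi^*\big]^*(x)+\alpha\beta_2 t\Big)^{1/\alpha}=\Big(1-\alpha(1+\beta_1t)\varphi\big(\tfrac{x}{1+\beta_1 t}\big)+\alpha\beta_2t\Big)^{1/\alpha}.$$ Then $$\lim_{t\to0^+}\int_{\mathbb{R}^n}\frac{\widehat{f_t}(x)-f(x)}{t}\,dx=\beta_2\int_{\mathbb{R}^n}f(x)^{1-\alpha}\,dx+\beta_1\,\delta J_\alpha(f,f),$$ and this limit is a finite real number.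
   Context: $\mathrm{Conv}(\mathbb{R}^n)$ is the set of proper, convex, lower semi-continuous $\varphi:\mathbb{R}^n\to\mathbb{R}\cup\{+\infty\}$; $\varphi$ is coercive if $\liminf_{|x|\to\infty}\varphi(x)/|x|>0$. For $\alpha<0$, $\mathcal{C}^+_\alpha(\mathbb{R}^n)$ is the set of $f=(1-\alpha\varphi)^{1/\alpha}$ with $\varphi\in\mathrm{Conv}(\mathbb{R}^n)$ nonnegative and coercive (convention: $f=0$ where $\varphi=+\infty$). $K_f=\overline{\mathrm{dom}\,\varphi}$ is the support of $f$, where $\mathrm{dom}\,\varphi=\{\varphi<\infty\}$. The Legendre transform is $\varphi^*(y)=\sup_x\{\langle x,y\rangle-\varphi(x)\}$. For $\alpha$-concave $f=(1-\alpha\varphi)^{1/\alpha}$, $g=(1-\alpha\psi)^{1/\alpha}$ and $t>0$, $f\oplus_\alpha t\cdot_\alpha g:=(1-\alpha(\varphi^*+t\psi^* )^* )^{1/\alpha}$; $J(f)=\int f\,dx$; $\delta J_\alpha(f,g):=\lim_{t\to0^+}\frac{J(f\oplus_\alpha t\cdot_\alpha g)-J(f)}{t}$ (it is known that $\delta J_\alpha(f,f)=nJ(f)-\int\varphi f^{1-\alpha}dx$ is finite). *)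

theory Defs
  imports "HOL-Analysis.Analysis"
begin

(* Functions R^n -> R \<union> {+\<infinity>} are modelled as 'a \<Rightarrow> ereal,
   with 'a a Euclidean space of dimension n = DIM('a). *)

definition proper_fun :: "('a \<Rightarrow> ereal) \<Rightarrow> bool" where
  "proper_fun \<phi> \<longleftrightarrow> (\<exists>x. \<phi> x < \<infinity>) \<and> (\<forall>x. \<phi> x > -\<infinity>)"

definition convex_efun :: "('a::real_vector \<Rightarrow> ereal) \<Rightarrow> bool" where
  "convex_efun \<phi> \<longleftrightarrow> (\<forall>x y t. 0 \<le> t \<and> t \<le> 1 \<longrightarrow>
      \<phi> ((1 - t) *\<^sub>R x + t *\<^sub>R y) \<le> ereal (1 - t) * \<phi> x + ereal t * \<phi> y)"

definition lsc_efun :: "('a::topological_space \<Rightarrow> ereal) \<Rightarrow> bool" where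
  "lsc_efun \<phi> \<longleftrightarrow> (\<forall>x. \<phi> x \<le> Liminf (at x) \<phi>)"

definition Conv :: "('a::euclidean_space \<Rightarrow> ereal) set" where
  "Conv = {\<phi>. proper_fun \<phi> \<and> convex_efun \<phi> \<and> lsc_efun \<phi>}"

definition coercive :: "('a::euclidean_space \<Rightarrow> ereal) \<Rightarrow> bool" where
  "coercive \<phi> \<longleftrightarrow> Liminf at_infinity (\<lambda>x. \<phi> x / ereal (norm x)) > 0"

definition legendre :: "('a::euclidean_space \<Rightarrow> ereal) \<Rightarrow> 'a \<Rightarrow> ereal" where
  "legendre \<phi> y = (SUP x. ereal (x \<bullet> y) - \<phi> x)"

definition alpha_fun :: "real \<Rightarrow> ('a \<Rightarrow> ereal) \<Rightarrow> 'a \<Rightarrow> real" where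
  "alpha_fun \<alpha> \<phi> x = (if \<phi> x = \<infinity> then 0 else (1 - \<alpha> * real_of_ereal (\<phi> x)) powr (1 / \<alpha>))"

(* C^+_\<alpha>(R^n), parametrised by the convex function \<phi>: f = alpha_fun \<alpha> \<phi> with
   \<phi> \<in> Conv, \<phi> \<ge> 0, coercive *)
definition Cplus_phi :: "('a::euclidean_space \<Rightarrow> ereal) set" where
  "Cplus_phi = {\<phi>. \<phi> \<in> Conv \<and> (\<forall>x. \<phi> x \<ge> 0) \<and> coercive \<phi>}"

definition Ksupp :: "('a::euclidean_space \<Rightarrow> ereal) \<Rightarrow> 'a set" where
  "Ksupp \<phi> = closure {x. \<phi> x < \<infinity>}"

definition J :: "('a::euclidean_space \<Rightarrow> real) \<Rightarrow> real" where
  "J f = integral\<^sup>L lborel f"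

(* f \<oplus>_\<alpha> t \<cdot>_\<alpha> g for f = (1-\<alpha>\<phi>)^(1/\<alpha>), g = (1-\<alpha>\<psi>)^(1/\<alpha>) *)
definition alpha_sum :: "real \<Rightarrow> ('a::euclidean_space \<Rightarrow> ereal) \<Rightarrow> real \<Rightarrow> ('a \<Rightarrow> ereal) \<Rightarrow> 'a \<Rightarrow> real" where
  "alpha_sum \<alpha> \<phi> t \<psi> =
     alpha_fun \<alpha> (legendre (\<lambda>y. legendre \<phi> y + ereal t * legendre \<psi> y))"

definition deltaJ :: "real \<Rightarrow> ('a::euclidean_space \<Rightarrow> ereal) \<Rightarrow> ('a \<Rightarrow> ereal) \<Rightarrow> real" where
  "deltaJ \<alpha> \<phi> \<psi> =
     Lim (at_right 0) (\<lambda>t. (J (alpha_sum \<alpha> \<phi> t \<psi>) - J (alpha_fun \<alpha> \<phi>)) / t)"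

definition fhat :: "real \<Rightarrow> real \<Rightarrow> real \<Rightarrow> ('a::euclidean_space \<Rightarrow> ereal) \<Rightarrow> real \<Rightarrow> 'a \<Rightarrow> real" where
  "fhat \<alpha> \<beta>1 \<beta>2 \<phi> t x =
     (if \<phi> (x /\<^sub>R (1 + \<beta>1 * t)) = \<infinity> then 0
      else (1 - \<alpha> * (1 + \<beta>1 * t) * real_of_ereal (\<phi> (x /\<^sub>R (1 + \<beta>1 * t))) + \<alpha> * \<beta>2 * t)
             powr (1 / \<alpha>))"

end

theory Submission
  imports Defs
begin

text \<open>
  Write \<open>fhat\<^sub>t(x) = g\<^sub>t(x / (1 + \<beta>1 t))\<close> with
  \<open>g\<^sub>t = (1 - \<alpha> (1 + \<beta>1 t) \<phi> + \<alpha> \<beta>2 t)\<^bsup>1/\<alpha>\<^esup>\<close>, so that a dilation gives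
  \<open>J(fhat\<^sub>t) = (1 + \<beta>1 t)\<^sup>n J(g\<^sub>t)\<close>. By the mean value theorem the difference quotients
  \<open>(g\<^sub>t - f) / t\<close> are bounded by a constant multiple of \<open>f\<close>, which is integrable because
  coercivity gives \<open>f(x) = O(|x|\<^bsup>1/\<alpha>\<^esup>)\<close> with \<open>1/\<alpha> < -n\<close>; dominated convergence then
  yields the derivative \<open>\<integral> (\<beta>2 - \<beta>1 \<phi>) f\<^bsup>1-\<alpha>\<^esup>\<close> of \<open>J(g\<^sub>t)\<close> at \<open>t = 0\<close>.
  Finally, Fenchel--Moreau gives \<open>((1 + t) \<phi>\<^sup>*)\<^sup>* = (1 + t) \<phi>(\<cdot> / (1 + t))\<close>, so
  \<open>f \<oplus>\<^sub>\<alpha> t \<cdot>\<^sub>\<alpha> f\<close> is the case \<open>\<beta>1 = 1, \<beta>2 = 0\<close>, which identifies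
  \<open>\<delta>J\<^sub>\<alpha>(f, f) = n J(f) - \<integral> \<phi> f\<^bsup>1-\<alpha>\<^esup>\<close>.
\<close>

section \<open>Lebesgue measure under affine changes of variables\<close>

lemma nn_integral_lborel_affine:
  fixes f :: "'a::euclidean_space \<Rightarrow> ennreal"
  assumes [measurable]: "f \<in> borel_measurable borel" and c: "c \<noteq> 0"
  shows "(\<integral>\<^sup>+x. f x \<partial>lborel) = ennreal (\<bar>c\<bar> ^ DIM('a)) * (\<integral>\<^sup>+x. f (t + c *\<^sub>R x) \<partial>lborel)"
  by (subst lborel_affine[OF c, of t]) (simp add: nn_integral_density nn_integral_distr nn_integral_cmult)

lemma lborel_integrable_affine:
  fixes f :: "'a::euclidean_space \<Rightarrow> 'b::{banach, second_countable_topology}"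
  assumes f: "integrable lborel f" and c: "c \<noteq> 0"
  shows "integrable lborel (\<lambda>x. f (t + c *\<^sub>R x))"
  using f f[THEN borel_measurable_integrable] c unfolding integrable_iff_bounded
  by (subst (asm) nn_integral_lborel_affine[where c=c and t=t]) (auto simp: ennreal_mult_less_top)

lemma lborel_integrable_affine_iff:
  fixes f :: "'a::euclidean_space \<Rightarrow> 'b::{banach, second_countable_topology}"
  assumes c: "c \<noteq> 0"
  shows "integrable lborel (\<lambda>x. f (t + c *\<^sub>R x)) \<longleftrightarrow> integrable lborel f"
  using lborel_integrable_affine[of f c t]
    lborel_integrable_affine[of "\<lambda>x. f (t + c *\<^sub>R x)" "1 / c" "- t /\<^sub>R c"] c
  by (auto simp: algebra_simps)

lemma lborel_integral_affine:
  fixes f :: "'a::euclidean_space \<Rightarrow> 'b::{banach, second_countable_topology}"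
  assumes c: "c \<noteq> 0"
  shows "(\<integral>x. f x \<partial>lborel) = \<bar>c\<bar> ^ DIM('a) *\<^sub>R (\<integral>x. f (t + c *\<^sub>R x) \<partial>lborel)"
proof cases
  assume f[measurable]: "integrable lborel f"
  then show ?thesis
    using c lborel_integrable_affine[OF f c, of t]
    by (subst lborel_affine[OF c, of t]) (simp add: integral_density integral_distr)
next
  assume "\<not> integrable lborel f"
  with c show ?thesis by (simp add: lborel_integrable_affine_iff not_integrable_integral_eq)
qed

section \<open>Limits of difference quotients\<close>

lemma integral_dominated_convergence_at_right:
  fixes s :: "real \<Rightarrow> 'a \<Rightarrow> 'b::{banach, second_countable_topology}" and w :: "'a \<Rightarrow> real"
  assumes "f \<in> borel_measurable M" and "\<And>t. s t \<in> borel_measurable M" and "integrable M w"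
    and lim: "AE x in M. ((\<lambda>t. s t x) \<longlongrightarrow> f x) (at_right 0)"
    and bound: "\<forall>\<^sub>F t in at_right 0. AE x in M. norm (s t x) \<le> w x"
  shows "((\<lambda>t. integral\<^sup>L M (s t)) \<longlongrightarrow> integral\<^sup>L M f) (at_right 0)"
proof -
  have "AE x in M. ((\<lambda>\<tau>. s (inverse \<tau>) x) \<longlongrightarrow> f x) at_top"
    using lim by eventually_elim (simp add: filterlim_at_right_to_top)
  moreover have "\<forall>\<^sub>F \<tau> in at_top. AE x in M. norm (s (inverse \<tau>) x) \<le> w x"
    using bound by (simp add: eventually_at_right_to_top)
  ultimately show ?thesis
    using integral_dominated_convergence_at_top[OF assms(1,2,3)]
    by (simp add: filterlim_at_right_to_top)
qed

lemma tendsto_difference_quotient_mult: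
  fixes g c :: "real \<Rightarrow> real"
  assumes g: "((\<lambda>t. (g t - a) / t) \<longlongrightarrow> L) (at_right 0)"
    and c: "((\<lambda>t. (c t - 1) / t) \<longlongrightarrow> M) (at_right 0)"
  shows "((\<lambda>t. (c t * g t - a) / t) \<longlongrightarrow> M * a + L) (at_right 0)"
proof -
  have "((\<lambda>t. (c t - 1) / t * (a + t * ((g t - a) / t)) + (g t - a) / t)
      \<longlongrightarrow> M * (a + 0 * L) + L) (at_right 0)"
    by (intro tendsto_intros g c)
  moreover have "\<forall>\<^sub>F t in at_right 0.
      (c t - 1) / t * (a + t * ((g t - a) / t)) + (g t - a) / t = (c t * g t - a) / t"
    using eventually_at_right_less[of 0] by eventually_elim (simp add: field_simps)
  ultimately show ?thesis by (simp add: tendsto_cong)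
qed

lemma powr_affine_has_real_derivative:
  fixes A B q s :: real
  assumes "0 < A + B * s"
  shows "((\<lambda>t. (A + B * t) powr q) has_real_derivative q * B * (A + B * s) powr (q - 1)) (at s)"
  using assms by (auto intro!: derivative_eq_intros)

lemma powr_affine_difference_quotient_tendsto:
  fixes A B q :: real
  assumes "0 < A"
  shows "((\<lambda>t. ((A + B * t) powr q - A powr q) / t) \<longlongrightarrow> q * B * A powr (q - 1)) (at_right 0)"
proof -
  have "((\<lambda>t. ((A + B * t) powr q - A powr q) / t) \<longlongrightarrow> q * B * A powr (q - 1)) (at 0)"
    using powr_affine_has_real_derivative[of A B 0 q] assms
    unfolding has_field_derivative_iff by simp
  then show ?thesis by (rule filterlim_mono) (simp_all add: at_le)
qed

lemma powr_affine_difference_quotient_bound: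
  fixes A B q c t :: real
  assumes "0 < t" and "q \<le> 1" and "0 < c" and c: "\<And>s. 0 \<le> s \<Longrightarrow> s \<le> t \<Longrightarrow> c \<le> A + B * s"
  shows "\<bar>((A + B * t) powr q - A powr q) / t\<bar> \<le> \<bar>q * B\<bar> * c powr (q - 1)"
proof -
  have "\<And>s. 0 \<le> s \<Longrightarrow> s \<le> t \<Longrightarrow>
      ((\<lambda>t. (A + B * t) powr q) has_real_derivative q * B * (A + B * s) powr (q - 1)) (at s)"
    using c \<open>0 < c\<close> by (intro powr_affine_has_real_derivative) (meson less_le_trans)
  from MVT2[OF \<open>0 < t\<close> this] obtain z where z: "0 < z" "z < t"
    and eq: "(A + B * t) powr q - (A + B * 0) powr q = (t - 0) * (q * B * (A + B * z) powr (q - 1))"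
    by blast
  have "\<bar>((A + B * t) powr q - A powr q) / t\<bar> = \<bar>q * B\<bar> * (A + B * z) powr (q - 1)"
    using eq \<open>0 < t\<close> by (simp add: abs_mult)
  also have "\<dots> \<le> \<bar>q * B\<bar> * c powr (q - 1)"
    using c[of z] z \<open>0 < c\<close> \<open>q \<le> 1\<close> by (intro mult_left_mono powr_mono2') simp_all
  finally show ?thesis .
qed

section \<open>Lower semicontinuous extended-real functions\<close>

definition ereal_epigraph :: "('a \<Rightarrow> ereal) \<Rightarrow> ('a \<times> real) set" where
  "ereal_epigraph \<phi> = {p. \<phi> (fst p) \<le> ereal (snd p)}"

lemma lsc_efun_eventually_greater:
  assumes "lsc_efun \<phi>" and "y < \<phi> x"
  shows "\<forall>\<^sub>F z in nhds x. y < \<phi> z"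
proof -
  have "y < Liminf (at x) \<phi>" using assms unfolding lsc_efun_def by (blast intro: less_le_trans)
  then have "\<forall>\<^sub>F z in at x. y < \<phi> z" by (rule less_LiminfD)
  with \<open>y < \<phi> x\<close> show ?thesis by (simp add: eventually_nhds_conv_at)
qed

lemma open_eventually_nhds_iff: "open S \<longleftrightarrow> (\<forall>x\<in>S. \<forall>\<^sub>F y in nhds x. y \<in> S)"
  using eventually_nhds_in_open[of S] by (auto simp: open_subopen[of S] eventually_nhds subset_eq)

lemma closed_sublevel_lsc_efun:
  assumes "lsc_efun \<phi>"
  shows "closed {x. \<phi> x \<le> y}"
proof -
  have op: "open {x. y < \<phi> x}"
    unfolding open_eventually_nhds_iff by (auto intro: lsc_efun_eventually_greater[OF assms])
  show ?thesis using closed_Collect_neg[OF op] by (simp add: not_less)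
qed

lemma borel_measurable_lsc_efun:
  assumes "lsc_efun \<phi>"
  shows "\<phi> \<in> borel_measurable borel"
  by (rule borel_measurableI_le) (simp add: closed_sublevel_lsc_efun[OF assms])

lemma closed_ereal_epigraph:
  assumes "lsc_efun \<phi>"
  shows "closed (ereal_epigraph \<phi>)"
proof -
  have ev: "\<forall>\<^sub>F q in nhds (x, r). ereal (snd q) < \<phi> (fst q)" if lt: "ereal r < \<phi> x" for x r
  proof -
    obtain r' where "ereal r < ereal r'" and r': "ereal r' < \<phi> x"
      using ereal_dense2[OF lt] by blast
    then have "r < r'" by simp
    have "\<forall>\<^sub>F z in nhds x. ereal r' < \<phi> z" using lsc_efun_eventually_greater[OF assms r'] .
    moreover have "\<forall>\<^sub>F s in nhds r. s < r'"
      using eventually_nhds_in_open[of "{..<r'}" r] \<open>r < r'\<close> by simp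
    ultimately have "\<forall>\<^sub>F q in nhds x \<times>\<^sub>F nhds r. ereal r' < \<phi> (fst q) \<and> snd q < r'"
      by (rule eventually_prodI)
    then show ?thesis unfolding nhds_prod
      by (rule eventually_mono) (meson less_ereal.simps(1) less_trans)
  qed
  have op: "open {q. ereal (snd q) < \<phi> (fst q)}"
    unfolding open_eventually_nhds_iff by (auto intro: ev)
  show ?thesis unfolding ereal_epigraph_def using closed_Collect_neg[OF op] by (simp add: not_less)
qed

lemma convex_ereal_epigraph:
  assumes "convex_efun \<phi>"
  shows "convex (ereal_epigraph \<phi>)"
  unfolding convex_alt ereal_epigraph_def
proof (intro ballI allI impI, clarsimp)
  fix x r y s and u :: real
  assume le: "\<phi> x \<le> ereal r" "\<phi> y \<le> ereal s" and u: "0 \<le> u" "u \<le> 1"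
  have "\<phi> ((1 - u) *\<^sub>R x + u *\<^sub>R y) \<le> ereal (1 - u) * \<phi> x + ereal u * \<phi> y"
    using assms u unfolding convex_efun_def by blast
  also have "\<dots> \<le> ereal (1 - u) * ereal r + ereal u * ereal s"
    using le u by (intro add_mono ereal_mult_left_mono) auto
  finally show "\<phi> ((1 - u) *\<^sub>R x + u *\<^sub>R y) \<le> ereal ((1 - u) * r + u * s)"
    by simp
qed

section \<open>Legendre transform and the Fenchel--Moreau theorem\<close>

lemma fenchel_young: "ereal (x \<bullet> y) - \<phi> x \<le> legendre \<phi> y"
  unfolding legendre_def by (rule SUP_upper) simp

lemma legendre_leI:
  assumes "\<And>x. ereal (x \<bullet> y) - \<phi> x \<le> c"
  shows "legendre \<phi> y \<le> c"
  unfolding legendre_def by (rule SUP_least) (use assms in simp)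

lemma legendre_legendre_le: "legendre (legendre \<phi>) x \<le> \<phi> x"
proof (rule legendre_leI)
  fix y
  show "ereal (y \<bullet> x) - legendre \<phi> y \<le> \<phi> x"
    using fenchel_young[of x y \<phi>]
    by (cases "\<phi> x"; cases "legendre \<phi> y") (auto simp: inner_commute)
qed

lemma legendre_legendre_ge_affine_minorant:
  assumes "\<And>z. ereal (z \<bullet> y - c) \<le> \<phi> z"
  shows "ereal (x \<bullet> y - c) \<le> legendre (legendre \<phi>) x"
proof -
  have "legendre \<phi> y \<le> ereal c"
  proof (rule legendre_leI)
    fix z
    show "ereal (z \<bullet> y) - \<phi> z \<le> ereal c"
      using assms[of z] by (cases "\<phi> z") auto
  qed
  then have "ereal (x \<bullet> y - c) \<le> ereal (y \<bullet> x) - legendre \<phi> y"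
    by (cases "legendre \<phi> y") (auto simp: inner_commute)
  also have "\<dots> \<le> legendre (legendre \<phi>) x" by (rule fenchel_young)
  finally show ?thesis .
qed

lemma legendre_neq_MInf:
  assumes "\<phi> x \<noteq> \<infinity>" and "\<phi> x \<noteq> - \<infinity>"
  shows "legendre \<phi> y \<noteq> - \<infinity>"
  using fenchel_young[of x y \<phi>] assms by (cases "\<phi> x") auto

lemma legendre_cmult:
  assumes "c > 0"
  shows "legendre (\<lambda>y. ereal c * \<psi> y) x = ereal c * legendre \<psi> (x /\<^sub>R c)"
proof -
  have "ereal (y \<bullet> x) - ereal c * \<psi> y = ereal c * (ereal (y \<bullet> (x /\<^sub>R c)) - \<psi> y)" for y
    using assms by (cases "\<psi> y") (auto simp: field_simps)
  then have "legendre (\<lambda>y. ereal c * \<psi> y) x = (SUP y. ereal c * (ereal (y \<bullet> (x /\<^sub>R c)) - \<psi> y))"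
    unfolding legendre_def by simp
  also have "\<dots> = ereal c * legendre \<psi> (x /\<^sub>R c)"
    unfolding legendre_def using assms by (subst Sup_ereal_mult_left') auto
  finally show ?thesis .
qed

lemma ereal_epigraph_separation:
  fixes \<phi> :: "'a::euclidean_space \<Rightarrow> ereal"
  assumes cv: "convex_efun \<phi>" and lsc: "lsc_efun \<phi>" and x0: "\<bar>\<phi> x0\<bar> \<noteq> \<infinity>"
    and M: "ereal M < \<phi> x"
  obtains a1 a2 b where "a1 \<bullet> x + a2 * M < b" and "\<And>z r. \<phi> z \<le> ereal r \<Longrightarrow> b < a1 \<bullet> z + a2 * r"
    and "0 \<le> a2"
proof -
  have "(x, M) \<notin> ereal_epigraph \<phi>" using M by (simp add: ereal_epigraph_def not_le)
  then obtain a b where ab: "a \<bullet> (x, M) < b" "\<And>p. p \<in> ereal_epigraph \<phi> \<Longrightarrow> b < a \<bullet> p"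
    using separating_hyperplane_closed_point[OF convex_ereal_epigraph[OF cv] closed_ereal_epigraph[OF lsc]]
    by blast
  obtain a1 a2 where a: "a = (a1, a2)" by (cases a)
  have below: "a1 \<bullet> x + a2 * M < b" using ab(1) a by simp
  have above: "b < a1 \<bullet> z + a2 * r" if "\<phi> z \<le> ereal r" for z r
    using ab(2)[of "(z, r)"] that a by (simp add: ereal_epigraph_def)
  have "a2 \<ge> 0"
  proof (rule ccontr)
    assume "\<not> a2 \<ge> 0"
    then have "a2 < 0" by simp
    define r where "r = max (real_of_ereal (\<phi> x0)) ((b - a1 \<bullet> x0) / a2)"
    have "ereal (real_of_ereal (\<phi> x0)) \<le> ereal r" by (simp add: r_def)
    then have "\<phi> x0 \<le> ereal r" using x0 by (simp add: ereal_real')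
    from above[OF this] have "b < a1 \<bullet> x0 + a2 * r" .
    moreover have "a2 * r \<le> a2 * ((b - a1 \<bullet> x0) / a2)"
      using \<open>a2 < 0\<close> by (intro mult_left_mono_neg) (simp_all add: r_def)
    ultimately show False using \<open>a2 < 0\<close> by simp
  qed
  with below above show ?thesis using that by blast
qed

lemma exists_affine_minorant_ge:
  fixes \<phi> :: "'a::euclidean_space \<Rightarrow> ereal"
  assumes cv: "convex_efun \<phi>" and lsc: "lsc_efun \<phi>" and nn: "\<And>z. \<phi> z \<ge> 0"
    and dom: "\<phi> x0 < \<infinity>" and M: "ereal M < \<phi> x"
  obtains y c where "\<And>z. ereal (z \<bullet> y - c) \<le> \<phi> z" and "M \<le> x \<bullet> y - c"
proof -
  have x0: "\<bar>\<phi> x0\<bar> \<noteq> \<infinity>" using dom nn[of x0] by auto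
  obtain a1 a2 b where below: "a1 \<bullet> x + a2 * M < b"
    and above: "\<And>z r. \<phi> z \<le> ereal r \<Longrightarrow> b < a1 \<bullet> z + a2 * r" and "0 \<le> a2"
    using ereal_epigraph_separation[OF cv lsc x0 M] by blast
  have finite: "ereal (real_of_ereal (\<phi> z)) = \<phi> z" if "\<phi> z \<noteq> \<infinity>" for z
    using that nn[of z] by (cases "\<phi> z") auto
  from \<open>0 \<le> a2\<close> consider "a2 > 0" | "a2 = 0" by linarith
  then show ?thesis
  proof cases
    case 1
    have affine: "z \<bullet> (- (1 / a2) *\<^sub>R a1) - - b / a2 = (b - a1 \<bullet> z) / a2" for z
      using 1 by (simp add: inner_commute field_simps)
    show ?thesis
    proof (rule that[of "- (1 / a2) *\<^sub>R a1" "- b / a2"], unfold affine)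
      fix z
      show "ereal ((b - a1 \<bullet> z) / a2) \<le> \<phi> z"
      proof (cases "\<phi> z = \<infinity>")
        case False
        with above[of z "real_of_ereal (\<phi> z)"] finite[of z]
        have "b - a1 \<bullet> z < a2 * real_of_ereal (\<phi> z)" by simp
        with 1 have "(b - a1 \<bullet> z) / a2 < real_of_ereal (\<phi> z)"
          by (simp add: pos_divide_less_eq mult.commute)
        then show ?thesis by (subst finite[OF False, symmetric]) simp
      qed simp
      show "M \<le> (b - a1 \<bullet> x) / a2"
        using below 1 by (simp add: pos_le_divide_eq mult.commute)
    qed
  next
    case 2
    \<comment> \<open>A vertical hyperplane: as \<open>\<phi> \<ge> 0\<close>, every nonnegative multiple of
      \<open>z \<mapsto> b - a1 \<bullet> z\<close> is an affine minorant, and a large one exceeds \<open>M\<close> at \<open>x\<close>.\<close>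
    define d where "d = b - a1 \<bullet> x"
    have "d > 0" using below 2 by (simp add: d_def)
    have affine: "z \<bullet> (- (\<bar>M\<bar> / d) *\<^sub>R a1) - - (\<bar>M\<bar> / d) * b = (\<bar>M\<bar> / d) * (b - a1 \<bullet> z)" for z
      by (simp add: inner_commute algebra_simps)
    show ?thesis
    proof (rule that[of "- (\<bar>M\<bar> / d) *\<^sub>R a1" "- (\<bar>M\<bar> / d) * b"], unfold affine)
      fix z
      show "ereal (\<bar>M\<bar> / d * (b - a1 \<bullet> z)) \<le> \<phi> z"
      proof (cases "\<phi> z = \<infinity>")
        case False
        with above[of z "real_of_ereal (\<phi> z)"] finite[of z] 2 have "b - a1 \<bullet> z < 0" by simp
        with \<open>d > 0\<close> have "\<bar>M\<bar> / d * (b - a1 \<bullet> z) \<le> 0"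
          by (intro mult_nonneg_nonpos) simp_all
        then show ?thesis using nn[of z] by (simp add: order_trans[OF _ nn[of z]])
      qed simp
      show "M \<le> \<bar>M\<bar> / d * (b - a1 \<bullet> x)"
        using \<open>d > 0\<close> by (simp add: d_def)
    qed
  qed
qed

theorem fenchel_moreau:
  fixes \<phi> :: "'a::euclidean_space \<Rightarrow> ereal"
  assumes "convex_efun \<phi>" and "lsc_efun \<phi>" and "\<And>z. \<phi> z \<ge> 0" and "\<phi> x0 < \<infinity>"
  shows "legendre (legendre \<phi>) x = \<phi> x"
proof (rule antisym[OF legendre_legendre_le], rule ccontr)
  assume "\<not> \<phi> x \<le> legendre (legendre \<phi>) x"
  then have "legendre (legendre \<phi>) x < \<phi> x" by simp
  then obtain M where M: "legendre (legendre \<phi>) x < ereal M" "ereal M < \<phi> x"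
    using ereal_dense2 by blast
  obtain y c where minorant: "\<And>z. ereal (z \<bullet> y - c) \<le> \<phi> z" and "M \<le> x \<bullet> y - c"
    using exists_affine_minorant_ge[OF assms M(2)] by blast
  then have "ereal M \<le> ereal (x \<bullet> y - c)" by simp
  also have "\<dots> \<le> legendre (legendre \<phi>) x"
    using minorant by (rule legendre_legendre_ge_affine_minorant)
  finally show False using M(1) by simp
qed

lemma ereal_add_cmult_self:
  assumes "g \<noteq> - \<infinity>" and "t \<ge> 0"
  shows "g + ereal t * g = ereal (1 + t) * g"
  using assms by (cases g) (auto simp: algebra_simps)

lemma alpha_sum_self:
  fixes \<phi> :: "'a::euclidean_space \<Rightarrow> ereal"
  assumes "\<phi> \<in> Conv" and nn: "\<And>x. \<phi> x \<ge> 0" and "t \<ge> 0"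
  shows "alpha_sum \<alpha> \<phi> t \<phi> = fhat \<alpha> 1 0 \<phi> t"
proof
  fix x
  obtain x0 where x0: "\<phi> x0 < \<infinity>"
    using \<open>\<phi> \<in> Conv\<close> by (auto simp: Conv_def proper_fun_def)
  have "legendre \<phi> y \<noteq> - \<infinity>" for y
    using x0 nn[of x0] by (intro legendre_neq_MInf[of \<phi> x0]) auto
  then have "legendre (\<lambda>y. legendre \<phi> y + ereal t * legendre \<phi> y) x
      = legendre (\<lambda>y. ereal (1 + t) * legendre \<phi> y) x"
    using \<open>t \<ge> 0\<close> by (simp add: ereal_add_cmult_self)
  also have "\<dots> = ereal (1 + t) * legendre (legendre \<phi>) (x /\<^sub>R (1 + t))"
    using \<open>t \<ge> 0\<close> by (intro legendre_cmult) simp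
  also have "\<dots> = ereal (1 + t) * \<phi> (x /\<^sub>R (1 + t))"
    using \<open>\<phi> \<in> Conv\<close> nn x0 by (subst fenchel_moreau) (auto simp: Conv_def)
  finally show "alpha_sum \<alpha> \<phi> t \<phi> x = fhat \<alpha> 1 0 \<phi> t x"
    unfolding alpha_sum_def alpha_fun_def fhat_def
    using \<open>t \<ge> 0\<close> nn[of "x /\<^sub>R (1 + t)"]
    by (cases "\<phi> (x /\<^sub>R (1 + t))") (auto simp: algebra_simps)
qed

section \<open>Integrability of \<open>\<alpha>\<close>-concave functions\<close>

lemma nn_integral_max_1_abs_powr_less_top:
  fixes p :: real
  assumes p: "p < -1"
  shows "(\<integral>\<^sup>+t. ennreal (max 1 \<bar>t\<bar> powr p) \<partial>lborel) < \<infinity>"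
proof -
  define k :: "real \<Rightarrow> ennreal" where "k t = ennreal (t powr p) * indicator {1..} t" for t
  have [measurable]: "k \<in> borel_measurable borel" unfolding k_def by measurable
  have k: "(\<integral>\<^sup>+t. k t \<partial>lborel) = ennreal (- 1 / (p + 1))"
    unfolding k_def using has_integral_powr_to_inf[OF p, of 1]
    by (subst nn_integral_has_integral_lebesgue') auto
  have k_reflect: "(\<integral>\<^sup>+t. k (- t) \<partial>lborel) = (\<integral>\<^sup>+t. k t \<partial>lborel)"
    using nn_integral_real_affine[of k "-1" 0] by simp
  have "ennreal (max 1 \<bar>t\<bar> powr p) \<le> indicator {-1..1} t + k t + k (- t)" for t
    by (cases "\<bar>t\<bar> \<le> 1") (auto simp: k_def indicator_def abs_if not_le)
  then have "(\<integral>\<^sup>+t. ennreal (max 1 \<bar>t\<bar> powr p) \<partial>lborel)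
      \<le> (\<integral>\<^sup>+t. indicator {-1..1} t + k t + k (- t) \<partial>lborel)"
    by (rule nn_integral_mono)
  also have "\<dots> = (\<integral>\<^sup>+t. indicator {-1..1::real} t \<partial>lborel) + (\<integral>\<^sup>+t. k t \<partial>lborel) + (\<integral>\<^sup>+t. k (- t) \<partial>lborel)"
    by (simp add: nn_integral_add)
  also have "\<dots> = ennreal 2 + ennreal (- 1 / (p + 1)) + ennreal (- 1 / (p + 1))"
    by (simp add: k_reflect k)
  also have "\<dots> < \<infinity>" by (simp del: ennreal_plus add: ennreal_plus[symmetric])
  finally show ?thesis .
qed

text \<open>Dominate by a product of one-dimensional functions, using
  \<open>(\<Prod>b\<in>Basis. max 1 \<bar>x \<bullet> b\<bar>) \<le> max 1 (norm x) ^ DIM('a)\<close>.\<close>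

lemma integrable_max_1_norm_powr:
  assumes q: "q < - real DIM('a)"
  shows "integrable lborel (\<lambda>x::'a::euclidean_space. max 1 (norm x) powr q)"
proof -
  define n where "n = real DIM('a)"
  define p where "p = q / n"
  have "n > 0" by (simp add: n_def)
  then have "p < -1" using q by (simp add: p_def n_def divide_less_eq)
  have le_prod: "max 1 (norm x) powr q \<le> (\<Prod>b\<in>Basis. max 1 \<bar>x \<bullet> b\<bar> powr p)" for x :: 'a
  proof -
    have "(\<Prod>b\<in>Basis. max 1 \<bar>x \<bullet> b\<bar>) \<le> (\<Prod>b\<in>(Basis::'a set). max 1 (norm x))"
      by (intro prod_mono) (auto intro: max.coboundedI2 Basis_le_norm)
    also have "\<dots> = max 1 (norm x) powr n" by (simp add: n_def powr_realpow)
    finally have "(max 1 (norm x) powr n) powr p \<le> (\<Prod>b\<in>Basis. max 1 \<bar>x \<bullet> b\<bar>) powr p"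
      using \<open>p < -1\<close> by (intro powr_mono2') (auto intro: prod_pos)
    then show ?thesis
      using \<open>n > 0\<close> by (simp add: powr_powr p_def prod_powr_distrib)
  qed
  have "(\<integral>\<^sup>+x. ennreal (\<Prod>b\<in>Basis. max 1 \<bar>x \<bullet> b\<bar> powr p) \<partial>(lborel::'a measure))
      = (\<integral>\<^sup>+t. ennreal (max 1 \<bar>t\<bar> powr p) \<partial>lborel) ^ DIM('a)"
    using nn_integral_lborel_prod[of "\<lambda>_ t. ennreal (max 1 \<bar>t\<bar> powr p)"]
    by (simp add: prod_ennreal[symmetric])
  also have "\<dots> < \<infinity>"
    using nn_integral_max_1_abs_powr_less_top[OF \<open>p < -1\<close>] by (simp add: power_less_top_ennreal)
  finally have "integrable lborel (\<lambda>x::'a. \<Prod>b\<in>Basis. max 1 \<bar>x \<bullet> b\<bar> powr p)"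
    by (simp add: integrable_iff_bounded prod_nonneg)
  then show ?thesis
    by (rule Bochner_Integration.integrable_bound) (auto intro!: AE_I2 le_prod simp: prod_nonneg)
qed

lemma coercive_linear_lower_bound:
  fixes \<phi> :: "'a::euclidean_space \<Rightarrow> ereal"
  assumes "coercive \<phi>"
  obtains c R where "c > 0" and "\<And>x. R \<le> norm x \<Longrightarrow> ereal (c * norm x) \<le> \<phi> x"
proof -
  obtain c where c: "0 < ereal c" "ereal c < Liminf at_infinity (\<lambda>x. \<phi> x / ereal (norm x))"
    using assms ereal_dense2 unfolding coercive_def by blast
  have "\<forall>\<^sub>F x in at_infinity. ereal c < \<phi> x / ereal (norm x)"
    using c(2) by (rule less_LiminfD)
  moreover have "\<forall>\<^sub>F x in at_infinity. 1 \<le> norm (x::'a)"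
    by (auto simp: eventually_at_infinity)
  ultimately have "\<forall>\<^sub>F x in at_infinity. ereal (c * norm x) \<le> \<phi> x"
  proof eventually_elim
    case (elim x)
    then have "norm x > 0" by linarith
    with elim show ?case
      by (cases "\<phi> x") (auto simp: pos_less_divide_eq mult.commute)
  qed
  then obtain R where "\<And>x. R \<le> norm x \<Longrightarrow> ereal (c * norm x) \<le> \<phi> x"
    by (auto simp: eventually_at_infinity)
  moreover have "c > 0" using c(1) by simp
  ultimately show ?thesis using that by blast
qed

lemma alpha_fun_nonneg: "0 \<le> alpha_fun \<alpha> \<phi> x"
  by (simp add: alpha_fun_def)

lemma borel_measurable_alpha_fun [measurable]:
  assumes [measurable]: "\<phi> \<in> borel_measurable borel"
  shows "alpha_fun \<alpha> \<phi> \<in> borel_measurable borel"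
  unfolding alpha_fun_def[abs_def] by measurable

lemma alpha_fun_le_1:
  assumes "\<alpha> < 0" and "0 \<le> \<phi> x"
  shows "alpha_fun \<alpha> \<phi> x \<le> 1"
proof (cases "\<phi> x")
  case (real v)
  with assms have "1 \<le> 1 - \<alpha> * v" by (simp add: mult_nonpos_nonneg)
  then have "(1 - \<alpha> * v) powr (1 / \<alpha>) \<le> 1 powr (1 / \<alpha>)"
    using \<open>\<alpha> < 0\<close> by (intro powr_mono2') simp_all
  then show ?thesis using real by (simp add: alpha_fun_def)
qed (use assms in \<open>simp_all add: alpha_fun_def\<close>)

lemma alpha_fun_le_of_lower_bound:
  assumes "\<alpha> < 0" and "0 < r" and "ereal r \<le> \<phi> x"
  shows "alpha_fun \<alpha> \<phi> x \<le> (- \<alpha> * r) powr (1 / \<alpha>)"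
proof (cases "\<phi> x")
  case (real v)
  with assms have "\<alpha> * v \<le> \<alpha> * r" by (intro mult_left_mono_neg) simp_all
  then have "- \<alpha> * r \<le> 1 - \<alpha> * v" by simp
  moreover have "0 < - \<alpha> * r" using assms by (simp add: mult_neg_pos)
  ultimately show ?thesis
    using real \<open>\<alpha> < 0\<close> by (simp add: alpha_fun_def powr_mono2')
qed (use assms in \<open>simp_all add: alpha_fun_def\<close>)

lemma alpha_fun_le_max_1_norm_powr:
  fixes \<phi> :: "'a::euclidean_space \<Rightarrow> ereal"
  assumes "\<alpha> < 0" and nn: "\<And>x. 0 \<le> \<phi> x" and "coercive \<phi>"
  obtains K where "\<And>x. alpha_fun \<alpha> \<phi> x \<le> K * max 1 (norm x) powr (1 / \<alpha>)"
proof -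
  define q where "q = 1 / \<alpha>"
  have "q < 0" using \<open>\<alpha> < 0\<close> by (simp add: q_def)
  obtain c R0 where "c > 0" and c: "\<And>x. R0 \<le> norm x \<Longrightarrow> ereal (c * norm x) \<le> \<phi> x"
    using coercive_linear_lower_bound[OF \<open>coercive \<phi>\<close>] by blast
  define R where "R = max R0 1"
  define K where "K = max ((- \<alpha> * c) powr q) (R powr (- q))"
  have "alpha_fun \<alpha> \<phi> x \<le> K * max 1 (norm x) powr q" for x
  proof (cases "R \<le> norm x")
    case True
    then have "1 \<le> norm x" by (simp add: R_def)
    then have "0 < c * norm x" using \<open>c > 0\<close> by (intro mult_pos_pos) linarith+
    have "alpha_fun \<alpha> \<phi> x \<le> (- \<alpha> * (c * norm x)) powr q"
      using True \<open>0 < c * norm x\<close> \<open>\<alpha> < 0\<close> c[of x] unfolding q_def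
      by (intro alpha_fun_le_of_lower_bound) (simp_all add: R_def)
    also have "\<dots> = (- \<alpha> * c) powr q * max 1 (norm x) powr q"
      using powr_mult[of "- \<alpha> * c" "norm x" q] \<open>\<alpha> < 0\<close> \<open>c > 0\<close> \<open>1 \<le> norm x\<close>
      by (simp add: mult.assoc)
    also have "\<dots> \<le> K * max 1 (norm x) powr q"
      by (intro mult_right_mono) (simp_all add: K_def)
    finally show ?thesis .
  next
    case False
    have "alpha_fun \<alpha> \<phi> x \<le> 1" using \<open>\<alpha> < 0\<close> nn by (rule alpha_fun_le_1)
    also have "1 = R powr (- q) * R powr q" by (simp add: R_def powr_minus field_simps)
    also have "\<dots> \<le> K * max 1 (norm x) powr q"
      using False \<open>q < 0\<close> by (intro mult_mono powr_mono2') (auto simp: K_def R_def le_max_iff_disj)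
    finally show ?thesis .
  qed
  then show ?thesis using that unfolding q_def by blast
qed

lemma integrable_alpha_fun:
  fixes \<phi> :: "'a::euclidean_space \<Rightarrow> ereal"
  assumes "- 1 / real DIM('a) < \<alpha>" and "\<alpha> < 0" and "\<And>x. 0 \<le> \<phi> x" and "coercive \<phi>"
    and [measurable]: "\<phi> \<in> borel_measurable borel"
  shows "integrable lborel (alpha_fun \<alpha> \<phi>)"
proof -
  obtain K where K: "\<And>x. alpha_fun \<alpha> \<phi> x \<le> K * max 1 (norm x) powr (1 / \<alpha>)"
    using alpha_fun_le_max_1_norm_powr[OF assms(2-4)] by blast
  have "1 / \<alpha> < - real DIM('a)"
    using assms(1,2) by (simp add: divide_less_eq field_simps)
  then have "integrable lborel (\<lambda>x::'a. K * max 1 (norm x) powr (1 / \<alpha>))"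
    by (intro integrable_mult_right integrable_max_1_norm_powr)
  then show ?thesis
    by (rule Bochner_Integration.integrable_bound)
       (auto intro!: AE_I2 order_trans[OF K abs_ge_self] simp: alpha_fun_nonneg)
qed

section \<open>The first variation of the integral\<close>

definition fhat_unscaled :: "real \<Rightarrow> real \<Rightarrow> real \<Rightarrow> ('a \<Rightarrow> ereal) \<Rightarrow> real \<Rightarrow> 'a \<Rightarrow> real" where
  "fhat_unscaled \<alpha> \<beta>1 \<beta>2 \<phi> t x =
     (if \<phi> x = \<infinity> then 0
      else (1 - \<alpha> * (1 + \<beta>1 * t) * real_of_ereal (\<phi> x) + \<alpha> * \<beta>2 * t) powr (1 / \<alpha>))"

lemma fhat_eq_fhat_unscaled:
  "fhat \<alpha> \<beta>1 \<beta>2 \<phi> t x = fhat_unscaled \<alpha> \<beta>1 \<beta>2 \<phi> t (x /\<^sub>R (1 + \<beta>1 * t))"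
  by (simp add: fhat_def fhat_unscaled_def)

lemma borel_measurable_fhat_unscaled [measurable]:
  assumes [measurable]: "\<phi> \<in> borel_measurable borel"
  shows "fhat_unscaled \<alpha> \<beta>1 \<beta>2 \<phi> t \<in> borel_measurable borel"
  unfolding fhat_unscaled_def[abs_def] by measurable

lemma fhat_unscaled_finite:
  assumes "\<phi> x = ereal P"
  shows "fhat_unscaled \<alpha> \<beta>1 \<beta>2 \<phi> t x = (1 - \<alpha> * P + \<alpha> * (\<beta>2 - \<beta>1 * P) * t) powr (1 / \<alpha>)"
  using assms by (simp add: fhat_unscaled_def algebra_simps)

lemma alpha_fun_finite:
  assumes "\<phi> x = ereal P"
  shows "alpha_fun \<alpha> \<phi> x = (1 - \<alpha> * P) powr (1 / \<alpha>)"
  using assms by (simp add: alpha_fun_def)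

lemma alpha_fun_powr_one_minus:
  assumes "\<alpha> < 0" and "\<phi> x = ereal P" and "0 \<le> P"
  shows "alpha_fun \<alpha> \<phi> x powr (1 - \<alpha>) = (1 - \<alpha> * P) powr (1 / \<alpha> - 1)"
proof -
  have "1 / \<alpha> * (1 - \<alpha>) = 1 / \<alpha> - 1" using assms(1) by (simp add: field_simps)
  then show ?thesis using assms by (simp add: alpha_fun_finite powr_powr mult_nonpos_nonneg)
qed

lemma alpha_fun_powr_le:
  assumes "\<alpha> < 0" and "0 \<le> \<phi> x"
  shows "alpha_fun \<alpha> \<phi> x powr (1 - \<alpha>) \<le> alpha_fun \<alpha> \<phi> x"
  using assms alpha_fun_le_1[of \<alpha> \<phi> x] alpha_fun_nonneg[of \<alpha> \<phi> x]
  by (cases "alpha_fun \<alpha> \<phi> x = 0") (auto intro: powr_le_one_le)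

text \<open>The integrand \<open>real_of_ereal (\<phi> x) * alpha_fun \<alpha> \<phi> x powr (1 - \<alpha>)\<close> is the paper's
  \<open>\<phi> f\<^bsup>1-\<alpha>\<^esup>\<close>: where \<open>\<phi> x = \<infinity>\<close> both factors are \<open>0\<close>.\<close>

lemma phi_mult_alpha_fun_powr_bounds:
  assumes "\<alpha> < 0" and "0 \<le> \<phi> x"
  shows "0 \<le> real_of_ereal (\<phi> x) * alpha_fun \<alpha> \<phi> x powr (1 - \<alpha>)"
    and "real_of_ereal (\<phi> x) * alpha_fun \<alpha> \<phi> x powr (1 - \<alpha>) \<le> alpha_fun \<alpha> \<phi> x / - \<alpha>"
proof -
  show "0 \<le> real_of_ereal (\<phi> x) * alpha_fun \<alpha> \<phi> x powr (1 - \<alpha>)"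
    using assms(2) by (simp add: real_of_ereal_pos)
  show "real_of_ereal (\<phi> x) * alpha_fun \<alpha> \<phi> x powr (1 - \<alpha>) \<le> alpha_fun \<alpha> \<phi> x / - \<alpha>"
  proof (cases "\<phi> x")
    case (real P)
    define A where "A = 1 - \<alpha> * P"
    have "P \<ge> 0" "A \<ge> 1" using real assms by (simp_all add: A_def mult_nonpos_nonneg)
    have eq1: "alpha_fun \<alpha> \<phi> x powr (1 - \<alpha>) = A powr (1 / \<alpha> - 1)"
      using alpha_fun_powr_one_minus[of \<alpha> \<phi> x P] \<open>\<alpha> < 0\<close> real \<open>P \<ge> 0\<close> by (simp add: A_def)
    have eq2: "alpha_fun \<alpha> \<phi> x / - \<alpha> = A / - \<alpha> * A powr (1 / \<alpha> - 1)"
      using real \<open>A \<ge> 1\<close> by (simp add: alpha_fun_finite powr_diff flip: A_def)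
    have "P \<le> A / - \<alpha>" using \<open>\<alpha> < 0\<close> by (simp add: A_def field_simps)
    then have "P * A powr (1 / \<alpha> - 1) \<le> A / - \<alpha> * A powr (1 / \<alpha> - 1)"
      by (rule mult_right_mono) simp
    then show ?thesis unfolding eq1 eq2 using real by simp
  qed (use assms in \<open>simp_all add: alpha_fun_def\<close>)
qed

lemma fhat_unscaled_difference_quotient_tendsto:
  assumes "\<alpha> < 0" and "0 \<le> \<phi> x"
  shows "((\<lambda>t. (fhat_unscaled \<alpha> \<beta>1 \<beta>2 \<phi> t x - alpha_fun \<alpha> \<phi> x) / t)
      \<longlongrightarrow> (\<beta>2 - \<beta>1 * real_of_ereal (\<phi> x)) * alpha_fun \<alpha> \<phi> x powr (1 - \<alpha>)) (at_right 0)"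
proof (cases "\<phi> x")
  case (real P)
  define A where "A = 1 - \<alpha> * P"
  define B where "B = \<alpha> * (\<beta>2 - \<beta>1 * P)"
  have "P \<ge> 0" using real assms by simp
  with \<open>\<alpha> < 0\<close> have "A > 0" using mult_nonpos_nonneg[of \<alpha> P] by (simp add: A_def)
  have "((\<lambda>t. ((A + B * t) powr (1 / \<alpha>) - A powr (1 / \<alpha>)) / t)
      \<longlongrightarrow> 1 / \<alpha> * B * A powr (1 / \<alpha> - 1)) (at_right 0)"
    using \<open>A > 0\<close> by (rule powr_affine_difference_quotient_tendsto)
  moreover have "1 / \<alpha> * B = \<beta>2 - \<beta>1 * P" using \<open>\<alpha> < 0\<close> by (simp add: B_def)
  moreover have "alpha_fun \<alpha> \<phi> x powr (1 - \<alpha>) = A powr (1 / \<alpha> - 1)"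
    using alpha_fun_powr_one_minus[of \<alpha> \<phi> x P] \<open>\<alpha> < 0\<close> real \<open>P \<ge> 0\<close> by (simp add: A_def)
  ultimately show ?thesis
    using real by (simp add: fhat_unscaled_finite alpha_fun_finite A_def B_def)
qed (use assms in \<open>simp_all add: fhat_unscaled_def alpha_fun_def\<close>)

lemma abs_diff_mult_le:
  fixes \<alpha> \<beta>1 \<beta>2 P :: real
  assumes "\<alpha> < 0" and "0 \<le> \<beta>1" and "0 \<le> P"
  shows "\<bar>\<beta>2 - \<beta>1 * P\<bar> \<le> (\<bar>\<beta>2\<bar> - \<beta>1 / \<alpha>) * (1 - \<alpha> * P)"
proof -
  have "\<bar>\<beta>2 - \<beta>1 * P\<bar> \<le> \<bar>\<beta>2\<bar> + \<beta>1 * P"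
    using abs_triangle_ineq4[of \<beta>2 "\<beta>1 * P"] assms by simp
  also have "\<dots> \<le> \<bar>\<beta>2\<bar> * (1 - \<alpha> * P) + \<beta>1 * (P - 1 / \<alpha>)"
    using assms by (intro add_mono mult_left_mono) (simp_all add: mult_le_cancel_left1 mult_nonpos_nonneg)
  also have "\<dots> = (\<bar>\<beta>2\<bar> - \<beta>1 / \<alpha>) * (1 - \<alpha> * P)"
    using assms by (simp add: field_simps)
  finally show ?thesis .
qed

lemma fhat_unscaled_difference_quotient_bound:
  assumes "\<alpha> < 0" and "0 \<le> \<beta>1" and "0 \<le> \<phi> x" and "0 < t" and t: "2 * t * \<bar>\<alpha> * \<beta>2\<bar> \<le> 1"
  shows "\<bar>(fhat_unscaled \<alpha> \<beta>1 \<beta>2 \<phi> t x - alpha_fun \<alpha> \<phi> x) / t\<bar>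
      \<le> 2 powr (1 - 1 / \<alpha>) * (\<bar>\<beta>2\<bar> - \<beta>1 / \<alpha>) * alpha_fun \<alpha> \<phi> x"
proof (cases "\<phi> x")
  case (real P)
  define q where "q = 1 / \<alpha>"
  define A where "A = 1 - \<alpha> * P"
  define B where "B = \<alpha> * (\<beta>2 - \<beta>1 * P)"
  have "P \<ge> 0" using real assms by simp
  then have "\<alpha> * P \<le> 0" using \<open>\<alpha> < 0\<close> by (simp add: mult_nonpos_nonneg)
  then have "A \<ge> 1" by (simp add: A_def)
  have "q < 0" using \<open>\<alpha> < 0\<close> by (simp add: q_def)
  have lower: "A / 2 \<le> A + B * s" if "0 \<le> s" "s \<le> t" for s
  proof -
    have "0 \<le> - \<alpha> * \<beta>1 * P * s"
      using that \<open>\<alpha> < 0\<close> \<open>0 \<le> \<beta>1\<close> \<open>P \<ge> 0\<close> by (intro mult_nonneg_nonneg) simp_all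
    moreover have "- (\<alpha> * \<beta>2) * s \<le> \<bar>\<alpha> * \<beta>2\<bar> * s" using that by (intro mult_right_mono) simp_all
    moreover have "\<bar>\<alpha> * \<beta>2\<bar> * s \<le> \<bar>\<alpha> * \<beta>2\<bar> * t" using that by (intro mult_left_mono) simp_all
    ultimately show ?thesis using \<open>A \<ge> 1\<close> t by (simp add: B_def algebra_simps)
  qed
  have "\<bar>((A + B * t) powr q - A powr q) / t\<bar> \<le> \<bar>q * B\<bar> * (A / 2) powr (q - 1)"
    using \<open>0 < t\<close> \<open>q < 0\<close> \<open>A \<ge> 1\<close> lower by (intro powr_affine_difference_quotient_bound) simp_all
  also have "\<bar>q * B\<bar> \<le> (\<bar>\<beta>2\<bar> - \<beta>1 / \<alpha>) * A"
    using abs_diff_mult_le[OF \<open>\<alpha> < 0\<close> \<open>0 \<le> \<beta>1\<close> \<open>P \<ge> 0\<close>, of \<beta>2] \<open>\<alpha> < 0\<close>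
    by (simp add: q_def B_def A_def)
  then have "\<bar>q * B\<bar> * (A / 2) powr (q - 1) \<le> (\<bar>\<beta>2\<bar> - \<beta>1 / \<alpha>) * A * (A / 2) powr (q - 1)"
    by (rule mult_right_mono) simp
  also have "\<dots> = 2 powr (1 - q) * (\<bar>\<beta>2\<bar> - \<beta>1 / \<alpha>) * A powr q"
    using \<open>A \<ge> 1\<close> by (simp add: powr_divide powr_diff)
  finally show ?thesis
    using real by (simp add: fhat_unscaled_finite alpha_fun_finite q_def A_def B_def)
qed (use assms in \<open>simp_all add: fhat_unscaled_def alpha_fun_def\<close>)

lemma fhat_unscaled_difference_quotient_integral_tendsto:
  fixes \<phi> :: "'a::euclidean_space \<Rightarrow> ereal"
  assumes "\<alpha> < 0" and "0 \<le> \<beta>1" and nn: "\<And>x. 0 \<le> \<phi> x"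
    and [measurable]: "\<phi> \<in> borel_measurable borel" and f: "integrable lborel (alpha_fun \<alpha> \<phi>)"
  shows "\<forall>\<^sub>F t in at_right 0.
      integrable lborel (\<lambda>x. (fhat_unscaled \<alpha> \<beta>1 \<beta>2 \<phi> t x - alpha_fun \<alpha> \<phi> x) / t)"
    and "((\<lambda>t. \<integral>x. (fhat_unscaled \<alpha> \<beta>1 \<beta>2 \<phi> t x - alpha_fun \<alpha> \<phi> x) / t \<partial>lborel)
      \<longlongrightarrow> \<beta>2 * (\<integral>x. alpha_fun \<alpha> \<phi> x powr (1 - \<alpha>) \<partial>lborel)
          - \<beta>1 * (\<integral>x. real_of_ereal (\<phi> x) * alpha_fun \<alpha> \<phi> x powr (1 - \<alpha>) \<partial>lborel)) (at_right 0)"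
proof -
  define C where "C = 2 powr (1 - 1 / \<alpha>) * (\<bar>\<beta>2\<bar> - \<beta>1 / \<alpha>)"
  have intC: "integrable lborel (\<lambda>x. C * alpha_fun \<alpha> \<phi> x)" using f by simp
  have "\<forall>\<^sub>F t in at_right 0. 2 * t * \<bar>\<alpha> * \<beta>2\<bar> < 1"
    by (rule order_tendstoD) (auto intro!: tendsto_eq_intros)
  with eventually_at_right_less[of 0]
  have bound: "\<forall>\<^sub>F t in at_right 0. \<forall>x.
      norm ((fhat_unscaled \<alpha> \<beta>1 \<beta>2 \<phi> t x - alpha_fun \<alpha> \<phi> x) / t) \<le> C * alpha_fun \<alpha> \<phi> x"
  proof eventually_elim
    case (elim t)
    then show ?case
      using fhat_unscaled_difference_quotient_bound[of \<alpha> \<beta>1 \<phi> _ t \<beta>2] \<open>\<alpha> < 0\<close> \<open>0 \<le> \<beta>1\<close> nn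
      by (simp add: C_def)
  qed
  then show "\<forall>\<^sub>F t in at_right 0.
      integrable lborel (\<lambda>x. (fhat_unscaled \<alpha> \<beta>1 \<beta>2 \<phi> t x - alpha_fun \<alpha> \<phi> x) / t)"
    by eventually_elim
      (rule Bochner_Integration.integrable_bound[OF intC], auto intro: order_trans[OF _ abs_ge_self])
  have lim: "((\<lambda>t. \<integral>x. (fhat_unscaled \<alpha> \<beta>1 \<beta>2 \<phi> t x - alpha_fun \<alpha> \<phi> x) / t \<partial>lborel)
      \<longlongrightarrow> (\<integral>x. (\<beta>2 - \<beta>1 * real_of_ereal (\<phi> x)) * alpha_fun \<alpha> \<phi> x powr (1 - \<alpha>) \<partial>lborel)) (at_right 0)"
  proof (rule integral_dominated_convergence_at_right[OF _ _ intC])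
    show "\<forall>\<^sub>F t in at_right 0. AE x in lborel.
        norm ((fhat_unscaled \<alpha> \<beta>1 \<beta>2 \<phi> t x - alpha_fun \<alpha> \<phi> x) / t) \<le> C * alpha_fun \<alpha> \<phi> x"
      using bound by eventually_elim simp
  qed (use \<open>\<alpha> < 0\<close> nn in \<open>auto intro: fhat_unscaled_difference_quotient_tendsto\<close>)
  have "integrable lborel (\<lambda>x. alpha_fun \<alpha> \<phi> x powr (1 - \<alpha>))"
    using \<open>\<alpha> < 0\<close> nn
    by (intro Bochner_Integration.integrable_bound[OF f] AE_I2) (auto simp: alpha_fun_powr_le alpha_fun_nonneg)
  moreover have "integrable lborel (\<lambda>x. real_of_ereal (\<phi> x) * alpha_fun \<alpha> \<phi> x powr (1 - \<alpha>))"
    using phi_mult_alpha_fun_powr_bounds[of \<alpha> \<phi>] \<open>\<alpha> < 0\<close> nn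
    by (intro Bochner_Integration.integrable_bound[OF integrable_divide[OF f, of "- \<alpha>"]] AE_I2)
       (auto simp: alpha_fun_nonneg abs_of_nonneg)
  ultimately show "((\<lambda>t. \<integral>x. (fhat_unscaled \<alpha> \<beta>1 \<beta>2 \<phi> t x - alpha_fun \<alpha> \<phi> x) / t \<partial>lborel)
      \<longlongrightarrow> \<beta>2 * (\<integral>x. alpha_fun \<alpha> \<phi> x powr (1 - \<alpha>) \<partial>lborel)
          - \<beta>1 * (\<integral>x. real_of_ereal (\<phi> x) * alpha_fun \<alpha> \<phi> x powr (1 - \<alpha>) \<partial>lborel)) (at_right 0)"
    using lim by (simp add: left_diff_distrib mult.assoc)
qed

lemma integrable_difference_quotientD:
  fixes f g :: "'a \<Rightarrow> real"
  assumes "integrable M (\<lambda>x. (g x - f x) / t)" and "integrable M f" and "t \<noteq> 0"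
  shows "integrable M g"
proof -
  have "integrable M (\<lambda>x. f x + t * ((g x - f x) / t))"
    using assms by (intro Bochner_Integration.integrable_add integrable_mult_right)
  then show ?thesis using \<open>t \<noteq> 0\<close> by simp
qed

lemma power_difference_quotient_tendsto:
  "((\<lambda>t. ((1 + b * t) ^ n - 1) / t) \<longlongrightarrow> real n * b) (at_right (0::real))"
proof -
  have "((\<lambda>t. (1 + b * t) ^ n) has_real_derivative real n * b) (at 0)"
    by (auto intro!: derivative_eq_intros)
  then show ?thesis
    unfolding has_field_derivative_iff by (simp add: filterlim_at_split)
qed

lemma fhat_eq_dilation:
  "fhat \<alpha> \<beta>1 \<beta>2 \<phi> t = (\<lambda>x. fhat_unscaled \<alpha> \<beta>1 \<beta>2 \<phi> t (0 + inverse (1 + \<beta>1 * t) *\<^sub>R x))"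
  by (simp add: fun_eq_iff fhat_eq_fhat_unscaled)

lemma integrable_fhat:
  fixes \<phi> :: "'a::euclidean_space \<Rightarrow> ereal"
  assumes "0 \<le> \<beta>1 * t" and "integrable lborel (fhat_unscaled \<alpha> \<beta>1 \<beta>2 \<phi> t)"
  shows "integrable lborel (fhat \<alpha> \<beta>1 \<beta>2 \<phi> t)"
  unfolding fhat_eq_dilation using assms by (intro lborel_integrable_affine) simp_all

lemma integral_fhat:
  fixes \<phi> :: "'a::euclidean_space \<Rightarrow> ereal"
  assumes "0 \<le> \<beta>1 * t"
  shows "(\<integral>x. fhat \<alpha> \<beta>1 \<beta>2 \<phi> t x \<partial>lborel)
    = (1 + \<beta>1 * t) ^ DIM('a) * (\<integral>x. fhat_unscaled \<alpha> \<beta>1 \<beta>2 \<phi> t x \<partial>lborel)"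
proof -
  have "inverse (1 + \<beta>1 * t) \<noteq> 0" using assms by simp
  from lborel_integral_affine[OF this, of "fhat_unscaled \<alpha> \<beta>1 \<beta>2 \<phi> t" 0] assms
  show ?thesis unfolding fhat_eq_dilation by (simp add: power_inverse field_simps)
qed

lemma fhat_difference_quotient_integral_tendsto:
  fixes \<phi> :: "'a::euclidean_space \<Rightarrow> ereal"
  assumes "\<alpha> < 0" and "0 \<le> \<beta>1" and nn: "\<And>x. 0 \<le> \<phi> x"
    and [measurable]: "\<phi> \<in> borel_measurable borel" and f: "integrable lborel (alpha_fun \<alpha> \<phi>)"
  shows "\<forall>\<^sub>F t in at_right 0. integrable lborel (\<lambda>x. (fhat \<alpha> \<beta>1 \<beta>2 \<phi> t x - alpha_fun \<alpha> \<phi> x) / t)"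
    and "((\<lambda>t. \<integral>x. (fhat \<alpha> \<beta>1 \<beta>2 \<phi> t x - alpha_fun \<alpha> \<phi> x) / t \<partial>lborel)
      \<longlongrightarrow> \<beta>2 * (\<integral>x. alpha_fun \<alpha> \<phi> x powr (1 - \<alpha>) \<partial>lborel)
          + \<beta>1 * (real DIM('a) * (\<integral>x. alpha_fun \<alpha> \<phi> x \<partial>lborel)
                   - (\<integral>x. real_of_ereal (\<phi> x) * alpha_fun \<alpha> \<phi> x powr (1 - \<alpha>) \<partial>lborel))) (at_right 0)"
proof -
  let ?g = "fhat_unscaled \<alpha> \<beta>1 \<beta>2 \<phi>" and ?f = "alpha_fun \<alpha> \<phi>"
  let ?L = "\<beta>2 * (\<integral>x. ?f x powr (1 - \<alpha>) \<partial>lborel)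
    - \<beta>1 * (\<integral>x. real_of_ereal (\<phi> x) * ?f x powr (1 - \<alpha>) \<partial>lborel)"
  note unscaled = fhat_unscaled_difference_quotient_integral_tendsto[OF assms, of \<beta>2]
  have good: "\<forall>\<^sub>F t in at_right 0. 0 < t \<and> integrable lborel (?g t)"
    using eventually_at_right_less[of 0] unscaled(1)
    by eventually_elim (use f in \<open>auto intro: integrable_difference_quotientD\<close>)
  then show "\<forall>\<^sub>F t in at_right 0. integrable lborel (\<lambda>x. (fhat \<alpha> \<beta>1 \<beta>2 \<phi> t x - ?f x) / t)"
    by eventually_elim (use f \<open>0 \<le> \<beta>1\<close> in \<open>simp add: integrable_fhat\<close>)
  have "((\<lambda>t. ((\<integral>x. ?g t x \<partial>lborel) - (\<integral>x. ?f x \<partial>lborel)) / t) \<longlongrightarrow> ?L) (at_right 0)"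
  proof (rule tendsto_cong[THEN iffD1, OF _ unscaled(2)])
    show "\<forall>\<^sub>F t in at_right 0. (\<integral>x. (?g t x - ?f x) / t \<partial>lborel)
        = ((\<integral>x. ?g t x \<partial>lborel) - (\<integral>x. ?f x \<partial>lborel)) / t"
      using good by eventually_elim (use f in simp)
  qed
  note product = tendsto_difference_quotient_mult[OF this power_difference_quotient_tendsto]
  have "((\<lambda>t. \<integral>x. (fhat \<alpha> \<beta>1 \<beta>2 \<phi> t x - ?f x) / t \<partial>lborel)
      \<longlongrightarrow> real DIM('a) * \<beta>1 * (\<integral>x. ?f x \<partial>lborel) + ?L) (at_right 0)"
  proof (rule tendsto_cong[THEN iffD1, OF _ product])
    show "\<forall>\<^sub>F t in at_right 0.
        ((1 + \<beta>1 * t) ^ DIM('a) * (\<integral>x. ?g t x \<partial>lborel) - (\<integral>x. ?f x \<partial>lborel)) / t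
        = (\<integral>x. (fhat \<alpha> \<beta>1 \<beta>2 \<phi> t x - ?f x) / t \<partial>lborel)"
      using good by eventually_elim (use f \<open>0 \<le> \<beta>1\<close> in \<open>simp add: integrable_fhat integral_fhat\<close>)
  qed
  then show "((\<lambda>t. \<integral>x. (fhat \<alpha> \<beta>1 \<beta>2 \<phi> t x - ?f x) / t \<partial>lborel)
      \<longlongrightarrow> \<beta>2 * (\<integral>x. ?f x powr (1 - \<alpha>) \<partial>lborel)
          + \<beta>1 * (real DIM('a) * (\<integral>x. ?f x \<partial>lborel)
                   - (\<integral>x. real_of_ereal (\<phi> x) * ?f x powr (1 - \<alpha>) \<partial>lborel))) (at_right 0)"
    by (rule tendsto_eq_rhs) (simp add: algebra_simps)
qed

lemma deltaJ_self:
  fixes \<phi> :: "'a::euclidean_space \<Rightarrow> ereal"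
  assumes "\<alpha> < 0" and "\<phi> \<in> Conv" and nn: "\<And>x. 0 \<le> \<phi> x"
    and f: "integrable lborel (alpha_fun \<alpha> \<phi>)"
  shows "deltaJ \<alpha> \<phi> \<phi> = real DIM('a) * J (alpha_fun \<alpha> \<phi>)
      - (\<integral>x. real_of_ereal (\<phi> x) * alpha_fun \<alpha> \<phi> x powr (1 - \<alpha>) \<partial>lborel)"
proof -
  have "\<phi> \<in> borel_measurable borel"
    using \<open>\<phi> \<in> Conv\<close> by (intro borel_measurable_lsc_efun) (simp add: Conv_def)
  note first_variation = fhat_difference_quotient_integral_tendsto[OF \<open>\<alpha> < 0\<close> zero_le_one nn this f, of 0]
  have lim: "((\<lambda>t. \<integral>x. (fhat \<alpha> 1 0 \<phi> t x - alpha_fun \<alpha> \<phi> x) / t \<partial>lborel)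
      \<longlongrightarrow> real DIM('a) * J (alpha_fun \<alpha> \<phi>)
          - (\<integral>x. real_of_ereal (\<phi> x) * alpha_fun \<alpha> \<phi> x powr (1 - \<alpha>) \<partial>lborel)) (at_right 0)"
    using first_variation(2) by (simp add: J_def)
  have "\<forall>\<^sub>F t in at_right 0. (\<integral>x. (fhat \<alpha> 1 0 \<phi> t x - alpha_fun \<alpha> \<phi> x) / t \<partial>lborel)
      = (J (alpha_sum \<alpha> \<phi> t \<phi>) - J (alpha_fun \<alpha> \<phi>)) / t"
    using eventually_at_right_less[of 0] first_variation(1)
  proof eventually_elim
    case (elim t)
    then have "integrable lborel (fhat \<alpha> 1 0 \<phi> t)" using f by (auto intro: integrable_difference_quotientD)
    then show ?case
      using elim f alpha_sum_self[OF \<open>\<phi> \<in> Conv\<close> nn, of t \<alpha>] by (simp add: J_def)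
  qed
  from tendsto_cong[OF this, THEN iffD1, OF lim]
  show ?thesis
    unfolding deltaJ_def by (rule tendsto_Lim[rotated]) simp
qed

theorem theorem3p3:
  fixes \<phi> :: "'a::euclidean_space \<Rightarrow> ereal"
    and \<alpha> \<beta>1 \<beta>2 :: real
  assumes "- 1 / real DIM('a) < \<alpha>" and "\<alpha> < 0"
    and "\<beta>1 \<ge> 0"
    and "\<phi> \<in> Cplus_phi"
    and "0 \<in> interior (Ksupp \<phi>)"
  shows "(\<forall>\<^sub>F t in at_right 0.
            integrable lborel (\<lambda>x. (fhat \<alpha> \<beta>1 \<beta>2 \<phi> t x - alpha_fun \<alpha> \<phi> x) / t))
       \<and> ((\<lambda>t. \<integral>x. (fhat \<alpha> \<beta>1 \<beta>2 \<phi> t x - alpha_fun \<alpha> \<phi> x) / t \<partial>lborel)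
           \<longlongrightarrow> \<beta>2 * (\<integral>x. alpha_fun \<alpha> \<phi> x powr (1 - \<alpha>) \<partial>lborel)
               + \<beta>1 * deltaJ \<alpha> \<phi> \<phi>) (at_right 0)"
proof -
  have conv: "\<phi> \<in> Conv" and nn: "\<And>x. 0 \<le> \<phi> x" and "coercive \<phi>"
    using \<open>\<phi> \<in> Cplus_phi\<close> by (auto simp: Cplus_phi_def)
  then have [measurable]: "\<phi> \<in> borel_measurable borel"
    by (intro borel_measurable_lsc_efun) (simp add: Conv_def)
  have f: "integrable lborel (alpha_fun \<alpha> \<phi>)"
    using assms(1,2) nn \<open>coercive \<phi>\<close> by (rule integrable_alpha_fun) simp
  show ?thesis
    using fhat_difference_quotient_integral_tendsto[OF \<open>\<alpha> < 0\<close> \<open>\<beta>1 \<ge> 0\<close> nn _ f, of \<beta>2]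
      deltaJ_self[OF \<open>\<alpha> < 0\<close> conv nn f]
    by (simp add: J_def)
qed

end
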